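(* Let $\mathfrak K=(K,\bigsqcup,\odot,{}^*,{\sim},e)$ be a semi-Foulis dynamic algebra and $u\in\widetilde K$. Then the map $u\bullet(-)\colon\widetilde K\to\widetilde K$ equals the Sasaki projection $\pi_u$ of the orthomodular lattice $(\widetilde K,\preceq,{}^\perp)$, i.e. $u\bullet v=u\wedge(u^\perp\vee v)$ for all $v\in\widetilde K$.
   Context: An involutive unital quantale is $(Q,\bigsqcup,\odot,{}^*,e)$: $Q$ a complete join-semilattice, $\odot$ associative and distributing over arbitrary joins in each argument, $e$ a unit, ${}^*$ with $x^{**}=x$, $(x\odot y)^*=y^*\odot x^*$, $(\bigsqcup_i x_i)^*=\bigsqcup_i x_i^*$. An involutive generalized dynamic algebra is $\mathfrak K=(K,\bigsqcup,\odot,{}^*,{\sim},e)$ with $(K,\bigsqcup,\odot,{}^*,e)$ an involutive unital quantale and ${\sim}\colon K\to K$ such that for all $x,y\in K$ and families $(x_i)$: ${\sim}(x\odot{\sim}{\sim}y)={\sim}(x\odot y)$; ${\sim}(\bigsqcup_i{\sim}{\sim}x_i)={\sim}(\bigsqcup_i x_i)$; $({\sim}x)^*={\sim}x$; ${\sim}{\sim}({\sim}{\sim}x\odot y)={\sim}({\sim}x\sqcup{\sim}({\sim}x\sqcup y))$. Test set $\widetilde K=\{{\sim}k\mid k\in K\}$; for $W\subseteq\widetilde K$, $\bigvee W={\sim}{\sim}(\bigsqcup W)$; $w^\perp={\sim}w$; $k\preceq l$ iff $\bigvee\{k,l\}=l$; action $k\bullet v={\sim}{\sim}(k\odot v)$.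 It is a semi-Foulis dynamic algebra if $(\widetilde K,\preceq,{}^\perp)$ is a complete orthomodular lattice. In an orthomodular lattice the Sasaki projection onto $u$ is $\pi_u(x)=u\wedge(u^\perp\vee x)$. *)

theory Defs
  imports Main
begin

text \<open>The complete join-semilattice K is modelled by a type of class complete_lattice
  (every complete join-semilattice is a complete lattice); arbitrary joins are Sup.
  Multiplication m, involution s, the operation t (tilde) and unit e are parameters.\<close>

definition inv_unital_quantale ::
  "('a::complete_lattice \<Rightarrow> 'a \<Rightarrow> 'a) \<Rightarrow> ('a \<Rightarrow> 'a) \<Rightarrow> 'a \<Rightarrow> bool" where
  "inv_unital_quantale m s e \<longleftrightarrow>
     (\<forall>x y z. m (m x y) z = m x (m y z)) \<and>
     (\<forall>x A. m x (Sup A) = Sup ((\<lambda>a. m x a) ` A)) \<and>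
     (\<forall>x A. m (Sup A) x = Sup ((\<lambda>a. m a x) ` A)) \<and>
     (\<forall>x. m e x = x \<and> m x e = x) \<and>
     (\<forall>x. s (s x) = x) \<and>
     (\<forall>x y. s (m x y) = m (s y) (s x)) \<and>
     (\<forall>A. s (Sup A) = Sup (s ` A))"

definition inv_gen_dynamic_algebra ::
  "('a::complete_lattice \<Rightarrow> 'a \<Rightarrow> 'a) \<Rightarrow> ('a \<Rightarrow> 'a) \<Rightarrow> ('a \<Rightarrow> 'a) \<Rightarrow> 'a \<Rightarrow> bool" where
  "inv_gen_dynamic_algebra m s t e \<longleftrightarrow>
     inv_unital_quantale m s e \<and>
     (\<forall>x y. t (m x (t (t y))) = t (m x y)) \<and>
     (\<forall>(I::'a set) (f::'a \<Rightarrow> 'a). t (Sup ((\<lambda>i. t (t (f i))) ` I)) = t (Sup (f ` I))) \<and>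
     (\<forall>x. s (t x) = t x) \<and>
     (\<forall>x y. t (t (m (t (t x)) y)) = t (sup (t x) (t (sup (t x) y))))"

definition tests :: "('a \<Rightarrow> 'a) \<Rightarrow> 'a set" where
  "tests t = range t"

definition tvee :: "('a::complete_lattice \<Rightarrow> 'a) \<Rightarrow> 'a set \<Rightarrow> 'a" where
  "tvee t W = t (t (Sup W))"

definition tle :: "('a::complete_lattice \<Rightarrow> 'a) \<Rightarrow> 'a \<Rightarrow> 'a \<Rightarrow> bool" where
  "tle t k l \<longleftrightarrow> tvee t {k, l} = l"

definition act :: "('a \<Rightarrow> 'a \<Rightarrow> 'a) \<Rightarrow> ('a \<Rightarrow> 'a) \<Rightarrow> 'a \<Rightarrow> 'a \<Rightarrow> 'a" where
  "act m t k v = t (t (m k v))"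

definition is_lub_on :: "'b set \<Rightarrow> ('b \<Rightarrow> 'b \<Rightarrow> bool) \<Rightarrow> 'b set \<Rightarrow> 'b \<Rightarrow> bool" where
  "is_lub_on T le A x \<longleftrightarrow> x \<in> T \<and> (\<forall>a\<in>A. le a x) \<and> (\<forall>y\<in>T. (\<forall>a\<in>A. le a y) \<longrightarrow> le x y)"

definition is_glb_on :: "'b set \<Rightarrow> ('b \<Rightarrow> 'b \<Rightarrow> bool) \<Rightarrow> 'b set \<Rightarrow> 'b \<Rightarrow> bool" where
  "is_glb_on T le A x \<longleftrightarrow> x \<in> T \<and> (\<forall>a\<in>A. le x a) \<and> (\<forall>y\<in>T. (\<forall>a\<in>A. le y a) \<longrightarrow> le y x)"

definition ljoin :: "'b set \<Rightarrow> ('b \<Rightarrow> 'b \<Rightarrow> bool) \<Rightarrow> 'b \<Rightarrow> 'b \<Rightarrow> 'b" where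
  "ljoin T le x y = (THE z. is_lub_on T le {x, y} z)"

definition lmeet :: "'b set \<Rightarrow> ('b \<Rightarrow> 'b \<Rightarrow> bool) \<Rightarrow> 'b \<Rightarrow> 'b \<Rightarrow> 'b" where
  "lmeet T le x y = (THE z. is_glb_on T le {x, y} z)"

definition complete_orthomodular_lattice ::
  "'b set \<Rightarrow> ('b \<Rightarrow> 'b \<Rightarrow> bool) \<Rightarrow> ('b \<Rightarrow> 'b) \<Rightarrow> bool" where
  "complete_orthomodular_lattice T le c \<longleftrightarrow>
     \<comment> \<open>partial order\<close>
     (\<forall>x\<in>T. le x x) \<and>
     (\<forall>x\<in>T. \<forall>y\<in>T. le x y \<and> le y x \<longrightarrow> x = y) \<and>
     (\<forall>x\<in>T. \<forall>y\<in>T. \<forall>z\<in>T. le x y \<and> le y z \<longrightarrow> le x z) \<and>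
     \<comment> \<open>complete lattice\<close>
     (\<forall>A. A \<subseteq> T \<longrightarrow> (\<exists>x. is_lub_on T le A x)) \<and>
     (\<forall>A. A \<subseteq> T \<longrightarrow> (\<exists>x. is_glb_on T le A x)) \<and>
     \<comment> \<open>orthocomplementation\<close>
     (\<forall>x\<in>T. c x \<in> T) \<and>
     (\<forall>x\<in>T. c (c x) = x) \<and>
     (\<forall>x\<in>T. \<forall>y\<in>T. le x y \<longrightarrow> le (c y) (c x)) \<and>
     (\<forall>x\<in>T. is_lub_on T le {x, c x} (THE z. is_lub_on T le T z)) \<and>
     (\<forall>x\<in>T. is_glb_on T le {x, c x} (THE z. is_glb_on T le T z)) \<and>
     \<comment> \<open>orthomodular law\<close>
     (\<forall>x\<in>T. \<forall>y\<in>T. le x y \<longrightarrow> y = ljoin T le x (lmeet T le (c x) y))"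

definition semi_foulis_dynamic_algebra ::
  "('a::complete_lattice \<Rightarrow> 'a \<Rightarrow> 'a) \<Rightarrow> ('a \<Rightarrow> 'a) \<Rightarrow> ('a \<Rightarrow> 'a) \<Rightarrow> 'a \<Rightarrow> bool" where
  "semi_foulis_dynamic_algebra m s t e \<longleftrightarrow>
     inv_gen_dynamic_algebra m s t e \<and>
     complete_orthomodular_lattice (tests t) (tle t) t"

definition sasaki :: "'b set \<Rightarrow> ('b \<Rightarrow> 'b \<Rightarrow> bool) \<Rightarrow> ('b \<Rightarrow> 'b) \<Rightarrow> 'b \<Rightarrow> 'b \<Rightarrow> 'b" where
  "sasaki T le c u x = lmeet T le u (ljoin T le (c u) x)"

end

theory Submission
  imports Defs
begin

text \<open>On tests the order \<open>tle t\<close> has binary joins \<open>\<sim>\<sim>(a \<squnion> b)\<close>, so by De Morgan for the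
  orthocomplement \<open>\<sim>\<close> the binary meets are \<open>\<sim>(\<sim>a \<squnion> \<sim>b)\<close>. Unfolding the Sasaki projection
  with these formulas gives \<open>\<sim>(\<sim>u \<squnion> \<sim>(\<sim>u \<squnion> v))\<close>, which the last axiom of a generalized
  dynamic algebra identifies with \<open>\<sim>\<sim>(u \<odot> v) = u \<bullet> v\<close>.\<close>

lemma is_lub_on_unique:
  assumes "\<forall>x\<in>T. \<forall>y\<in>T. le x y \<and> le y x \<longrightarrow> x = y"
    and "is_lub_on T le A x" and "is_lub_on T le A y"
  shows "x = y"
  using assms unfolding is_lub_on_def by blast

lemma is_glb_on_unique:
  assumes "\<forall>x\<in>T. \<forall>y\<in>T. le x y \<and> le y x \<longrightarrow> x = y"
    and "is_glb_on T le A x" and "is_glb_on T le A y"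
  shows "x = y"
  using assms unfolding is_glb_on_def by blast

lemma ljoin_eqI:
  assumes "\<forall>x\<in>T. \<forall>y\<in>T. le x y \<and> le y x \<longrightarrow> x = y" and "is_lub_on T le {a, b} z"
  shows "ljoin T le a b = z"
  unfolding ljoin_def
proof (rule the_equality)
  show "is_lub_on T le {a, b} z" by (fact assms(2))
qed (rule is_lub_on_unique[OF assms(1) _ assms(2)])

lemma lmeet_eqI:
  assumes "\<forall>x\<in>T. \<forall>y\<in>T. le x y \<and> le y x \<longrightarrow> x = y" and "is_glb_on T le {a, b} z"
  shows "lmeet T le a b = z"
  unfolding lmeet_def
proof (rule the_equality)
  show "is_glb_on T le {a, b} z" by (fact assms(2))
qed (rule is_glb_on_unique[OF assms(1) _ assms(2)])

lemma is_glb_on_compl_of_is_lub_on_compl: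
  assumes closed: "\<forall>x\<in>T. c x \<in> T" and invol: "\<forall>x\<in>T. c (c x) = x"
    and antitone: "\<forall>x\<in>T. \<forall>y\<in>T. le x y \<longrightarrow> le (c y) (c x)"
    and a: "a \<in> T" and b: "b \<in> T" and lub: "is_lub_on T le {c a, c b} z"
  shows "is_glb_on T le {a, b} (c z)"
proof -
  have z: "z \<in> T" and "le (c a) z" "le (c b) z"
    using lub unfolding is_lub_on_def by auto
  then have "le (c z) (c (c a))" "le (c z) (c (c b))"
    using antitone closed a b by blast+
  then have lower: "le (c z) a" "le (c z) b"
    using invol a b by simp_all
  have greatest: "le y (c z)" if y: "y \<in> T" and "le y a" "le y b" for y
  proof -
    have "le (c a) (c y)" "le (c b) (c y)"
      using that antitone a b by blast+
    then have "le z (c y)"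
      using lub closed y unfolding is_lub_on_def by blast
    then have "le (c (c y)) (c z)"
      using antitone closed y z by blast
    then show ?thesis
      using invol y by simp
  qed
  show ?thesis
    unfolding is_glb_on_def using closed z lower greatest by blast
qed

context
  fixes m :: "'a::complete_lattice \<Rightarrow> 'a \<Rightarrow> 'a" and s t :: "'a \<Rightarrow> 'a" and e :: 'a
  assumes gda: "inv_gen_dynamic_algebra m s t e"
begin

text \<open>The axiom only speaks of families indexed by elements of the carrier itself.\<close>

lemma tilde_Sup_tilde_tilde:
  fixes f :: "'a \<Rightarrow> 'a" and I :: "'a set"
  shows "t (Sup ((\<lambda>i. t (t (f i))) ` I)) = t (Sup (f ` I))"
  using gda unfolding inv_gen_dynamic_algebra_def by simp

lemma tilde_mult_tilde_tilde: "t (m x (t (t y))) = t (m x y)"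
  using gda unfolding inv_gen_dynamic_algebra_def by simp

lemma tilde_tilde_mult_tilde_tilde: "t (t (m (t (t x)) y)) = t (sup (t x) (t (sup (t x) y)))"
  using gda unfolding inv_gen_dynamic_algebra_def by simp

lemma mult_unit_left: "m e x = x"
  using gda unfolding inv_gen_dynamic_algebra_def inv_unital_quantale_def by simp

lemma tilde_tilde_tilde: "t (t (t x)) = t x"
  using tilde_mult_tilde_tilde[of e x] by (simp add: mult_unit_left)

lemma tilde_sup_tilde_tilde: "t (sup (t (t x)) (t (t y))) = t (sup x y)"
  using tilde_Sup_tilde_tilde[of id "{x, y}"] by simp

lemma tilde_tilde_test: "w \<in> tests t \<Longrightarrow> t (t w) = w"
  unfolding tests_def using tilde_tilde_tilde by auto

lemma tle_iff: "tle t a b \<longleftrightarrow> t (t (sup a b)) = b"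
  unfolding tle_def tvee_def by simp

lemma is_lub_on_tests:
  assumes a: "a \<in> tests t" and b: "b \<in> tests t"
  shows "is_lub_on (tests t) (tle t) {a, b} (t (t (sup a b)))"
proof -
  have upper_a: "tle t a (t (t (sup a b)))"
    unfolding tle_iff using tilde_sup_tilde_tilde[of a "sup a b"] tilde_tilde_test[OF a]
    by (simp add: sup_assoc[symmetric])
  have upper_b: "tle t b (t (t (sup a b)))"
    unfolding tle_iff using tilde_sup_tilde_tilde[of b "sup a b"] tilde_tilde_test[OF b]
    by (simp add: sup_commute sup_left_commute)
  have least: "tle t (t (t (sup a b))) c" if c: "c \<in> tests t" and "tle t a c" "tle t b c" for c
  proof -
    have "t (t (t (sup a c))) = t c" and "t (t (t (sup b c))) = t c"
      using that unfolding tle_iff by simp_all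
    then have ac: "t (sup a c) = t c" and bc: "t (sup b c) = t c"
      by (simp_all add: tilde_tilde_tilde)
    have "t (sup (t (t (sup a b))) c) = t (sup (t (t (sup a b))) (t (t c)))"
      using tilde_tilde_test[OF c] by simp
    also have "\<dots> = t (sup a (sup b c))"
      using tilde_sup_tilde_tilde by (simp add: sup_assoc)
    also have "\<dots> = t (sup (t (t a)) (t (t (sup b c))))"
      using tilde_sup_tilde_tilde by simp
    also have "\<dots> = t c"
      using bc ac tilde_tilde_test[OF a] tilde_tilde_test[OF c] by simp
    finally show ?thesis
      unfolding tle_iff using tilde_tilde_test[OF c] by simp
  qed
  show ?thesis
    unfolding is_lub_on_def using upper_a upper_b least by (simp add: tests_def)
qed

lemma act_test:
  assumes "u \<in> tests t"
  shows "act m t u v = t (sup (t u) (t (sup (t u) v)))"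
  unfolding act_def
  using tilde_tilde_mult_tilde_tilde[of u v] tilde_tilde_test[OF assms] by simp

end

lemma complete_orthomodular_lattice_antisym:
  "complete_orthomodular_lattice T le c \<Longrightarrow> \<forall>x\<in>T. \<forall>y\<in>T. le x y \<and> le y x \<longrightarrow> x = y"
  unfolding complete_orthomodular_lattice_def by (elim conjE) assumption

lemma complete_orthomodular_lattice_involutive:
  "complete_orthomodular_lattice T le c \<Longrightarrow> \<forall>x\<in>T. c (c x) = x"
  unfolding complete_orthomodular_lattice_def by (elim conjE) assumption

lemma complete_orthomodular_lattice_antitone:
  "complete_orthomodular_lattice T le c \<Longrightarrow> \<forall>x\<in>T. \<forall>y\<in>T. le x y \<longrightarrow> le (c y) (c x)"
  unfolding complete_orthomodular_lattice_def by (elim conjE) assumption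

lemma semi_foulis_ljoin_tests:
  assumes sfda: "semi_foulis_dynamic_algebra m s t e" and a: "a \<in> tests t" and b: "b \<in> tests t"
  shows "ljoin (tests t) (tle t) a b = t (t (sup a b))"
proof -
  have gda: "inv_gen_dynamic_algebra m s t e"
    and oml: "complete_orthomodular_lattice (tests t) (tle t) t"
    using sfda unfolding semi_foulis_dynamic_algebra_def by blast+
  show ?thesis
    by (rule ljoin_eqI[OF complete_orthomodular_lattice_antisym[OF oml] is_lub_on_tests[OF gda a b]])
qed

lemma semi_foulis_lmeet_tests:
  assumes sfda: "semi_foulis_dynamic_algebra m s t e" and a: "a \<in> tests t" and b: "b \<in> tests t"
  shows "lmeet (tests t) (tle t) a b = t (sup (t a) (t b))"
proof -
  have gda: "inv_gen_dynamic_algebra m s t e"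
    and oml: "complete_orthomodular_lattice (tests t) (tle t) t"
    using sfda unfolding semi_foulis_dynamic_algebra_def by blast+
  have closed: "\<forall>x\<in>tests t. t x \<in> tests t"
    by (simp add: tests_def)
  have "is_lub_on (tests t) (tle t) {t a, t b} (t (t (sup (t a) (t b))))"
    using is_lub_on_tests[OF gda] closed a b by blast
  then have "is_glb_on (tests t) (tle t) {a, b} (t (t (t (sup (t a) (t b)))))"
    by (rule is_glb_on_compl_of_is_lub_on_compl[OF closed complete_orthomodular_lattice_involutive[OF oml]
          complete_orthomodular_lattice_antitone[OF oml] a b])
  then show ?thesis
    using lmeet_eqI[OF complete_orthomodular_lattice_antisym[OF oml]] tilde_tilde_tilde[OF gda]
    by simp
qed

theorem lemma3p6:
  fixes m :: "'a::complete_lattice \<Rightarrow> 'a \<Rightarrow> 'a" and s t :: "'a \<Rightarrow> 'a" and e u v :: 'a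
  assumes "semi_foulis_dynamic_algebra m s t e"
    and "u \<in> tests t" and "v \<in> tests t"
  shows "act m t u v = sasaki (tests t) (tle t) t u v"
proof -
  have gda: "inv_gen_dynamic_algebra m s t e"
    using assms(1) unfolding semi_foulis_dynamic_algebra_def by blast
  have tu: "t u \<in> tests t" and tj: "t (t (sup (t u) v)) \<in> tests t"
    by (simp_all add: tests_def)
  have "sasaki (tests t) (tle t) t u v = t (sup (t u) (t (t (t (sup (t u) v)))))"
    unfolding sasaki_def
    using semi_foulis_ljoin_tests[OF assms(1) tu assms(3)]
      semi_foulis_lmeet_tests[OF assms(1) assms(2) tj] by simp
  also have "\<dots> = t (sup (t u) (t (sup (t u) v)))"
    using tilde_tilde_tilde[OF gda] by simp
  also have "\<dots> = act m t u v"
    using act_test[OF gda assms(2)] by simp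
  finally show ?thesis by (rule sym)
qed

end
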